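(* Let $(X,d_X)$ and $(Y,d_Y)$ be metric spaces. Every distance-increasing, partial distance-preserving metric $d$ on $X\times Y$ induces the product topology on $X\times Y$.
   Context: A metric $d$ on $X\times Y$ is distance-increasing if $d((x_1,y_1),(x_2,y_2))\le d((x_3,y_3),(x_4,y_4))$ whenever $d_X(x_1,x_2)\le d_X(x_3,x_4)$ and $d_Y(y_1,y_2)\le d_Y(y_3,y_4)$; it is partial distance-preserving if $d((x_1,y),(x_2,y))=d_X(x_1,x_2)$ and $d((x,y_1),(x,y_2))=d_Y(y_1,y_2)$ for all $x,x_1,x_2\in X$, $y,y_1,y_2\in Y$. *)

theory Defs
  imports "HOL-Analysis.Analysis"
begin

definition distance_increasing ::
  "'a set \<Rightarrow> ('a \<Rightarrow> 'a \<Rightarrow> real) \<Rightarrow> 'b set \<Rightarrow> ('b \<Rightarrow> 'b \<Rightarrow> real)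
   \<Rightarrow> ('a \<times> 'b \<Rightarrow> 'a \<times> 'b \<Rightarrow> real) \<Rightarrow> bool" where
  "distance_increasing X dX Y dY d \<longleftrightarrow>
    (\<forall>x1\<in>X. \<forall>x2\<in>X. \<forall>x3\<in>X. \<forall>x4\<in>X. \<forall>y1\<in>Y. \<forall>y2\<in>Y. \<forall>y3\<in>Y. \<forall>y4\<in>Y.
       dX x1 x2 \<le> dX x3 x4 \<and> dY y1 y2 \<le> dY y3 y4 \<longrightarrow>
       d (x1, y1) (x2, y2) \<le> d (x3, y3) (x4, y4))"

definition partial_distance_preserving ::
  "'a set \<Rightarrow> ('a \<Rightarrow> 'a \<Rightarrow> real) \<Rightarrow> 'b set \<Rightarrow> ('b \<Rightarrow> 'b \<Rightarrow> real)
   \<Rightarrow> ('a \<times> 'b \<Rightarrow> 'a \<times> 'b \<Rightarrow> real) \<Rightarrow> bool" where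
  "partial_distance_preserving X dX Y dY d \<longleftrightarrow>
    (\<forall>x1\<in>X. \<forall>x2\<in>X. \<forall>y\<in>Y. d (x1, y) (x2, y) = dX x1 x2) \<and>
    (\<forall>x\<in>X. \<forall>y1\<in>Y. \<forall>y2\<in>Y. d (x, y1) (x, y2) = dY y1 y2)"

end

theory Submission
  imports Defs
begin

(* For a distance-increasing, partial distance-preserving
   metric d on X \<times> Y we sandwich d between the two component distances:
     max (dX x1 x2) (dY y1 y2) \<le> d (x1,y1) (x2,y2) \<le> dX x1 x2 + dY y1 y2.
   The lower bound compares (x1,y1),(x2,y2) with the pair (x1,y2),(x2,y2) resp.
   (x2,y1),(x2,y2), which differ in one coordinate only; the upper bound is the
   triangle inequality through the corner (x2,y1).  The library's Euclidean
   product metric prod_dist dX dY obeys the same sandwich, so d and prod_dist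
   are Lipschitz equivalent (each is at most twice the other).  Lipschitz
   equivalent metrics induce the same topology, and the library identifies the
   topology of prod_dist with the product topology. *)

(* A metric dominated by a multiple of another one has fewer open sets:
   a d2-ball of radius r contains the d1-ball of radius r/C. *)
lemma mtopology_coarser_if_dominated:
  assumes M1: "Metric_space M d1" and M2: "Metric_space M d2" and "C > 0"
    and dom: "\<And>x y. x \<in> M \<Longrightarrow> y \<in> M \<Longrightarrow> d2 x y \<le> C * d1 x y"
    and U: "openin (Metric_space.mtopology M d2) U"
  shows "openin (Metric_space.mtopology M d1) U"
proof -
  have "U \<subseteq> M" and balls2: "\<And>x. x \<in> U \<Longrightarrow> \<exists>r>0. Metric_space.mball M d2 x r \<subseteq> U"
    using U Metric_space.openin_mtopology[OF M2] by blast+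
  have "\<exists>s>0. Metric_space.mball M d1 x s \<subseteq> U" if "x \<in> U" for x
  proof -
    obtain r where "r > 0" and r: "Metric_space.mball M d2 x r \<subseteq> U"
      using balls2 \<open>x \<in> U\<close> by blast
    have "Metric_space.mball M d1 x (r / C) \<subseteq> Metric_space.mball M d2 x r"
    proof
      fix y assume "y \<in> Metric_space.mball M d1 x (r / C)"
      then have "x \<in> M" "y \<in> M" "C * d1 x y < r"
        using Metric_space.in_mball[OF M1] \<open>C > 0\<close> by (auto simp: field_simps)
      then show "y \<in> Metric_space.mball M d2 x r"
        using dom[of x y] Metric_space.in_mball[OF M2] by auto
    qed
    then show ?thesis
      using r \<open>r > 0\<close> \<open>C > 0\<close> by (intro exI[of _ "r / C"]) auto
  qed
  then show ?thesis
    using \<open>U \<subseteq> M\<close> Metric_space.openin_mtopology[OF M1] by blast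
qed

lemma mtopology_eq_if_Lipschitz_equivalent:
  assumes M1: "Metric_space M d1" and M2: "Metric_space M d2"
    and "C > 0" "D > 0"
    and "\<And>x y. x \<in> M \<Longrightarrow> y \<in> M \<Longrightarrow> d2 x y \<le> C * d1 x y"
    and "\<And>x y. x \<in> M \<Longrightarrow> y \<in> M \<Longrightarrow> d1 x y \<le> D * d2 x y"
  shows "Metric_space.mtopology M d1 = Metric_space.mtopology M d2"
  unfolding topology_eq
  using mtopology_coarser_if_dominated[OF M1 M2 assms(3,5)]
    mtopology_coarser_if_dominated[OF M2 M1 assms(4,6)] by blast

(* Lower half of the sandwich: each component distance is bounded by d.
   Moving only one coordinate is never farther than moving both, since the
   fixed coordinate contributes distance 0. *)
lemma distance_increasing_component_le:
  assumes "Metric_space X dX" "Metric_space Y dY"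
    and inc: "distance_increasing X dX Y dY d"
    and pres: "partial_distance_preserving X dX Y dY d"
    and "x1 \<in> X" "x2 \<in> X" "y1 \<in> Y" "y2 \<in> Y"
  shows "dX x1 x2 \<le> d (x1, y1) (x2, y2)" and "dY y1 y2 \<le> d (x1, y1) (x2, y2)"
proof -
  interpret X: Metric_space X dX by fact
  interpret Y: Metric_space Y dY by fact
  have "d (x1, y2) (x2, y2) \<le> d (x1, y1) (x2, y2)"
    using inc assms(5-8) Y.nonneg[of y1 y2] Y.mdist_zero[of y2]
    unfolding distance_increasing_def by (metis order_refl)
  then show "dX x1 x2 \<le> d (x1, y1) (x2, y2)"
    using pres assms(5-8) unfolding partial_distance_preserving_def by auto
  have "d (x2, y1) (x2, y2) \<le> d (x1, y1) (x2, y2)"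
    using inc assms(5-8) X.nonneg[of x1 x2] X.mdist_zero[of x2]
    unfolding distance_increasing_def by (metis order_refl)
  then show "dY y1 y2 \<le> d (x1, y1) (x2, y2)"
    using pres assms(5-8) unfolding partial_distance_preserving_def by auto
qed

lemma partial_distance_preserving_le_sum:
  assumes "Metric_space (X \<times> Y) d"
    and pres: "partial_distance_preserving X dX Y dY d"
    and "x1 \<in> X" "x2 \<in> X" "y1 \<in> Y" "y2 \<in> Y"
  shows "d (x1, y1) (x2, y2) \<le> dX x1 x2 + dY y1 y2"
proof -
  interpret D: Metric_space "X \<times> Y" d by fact
  have "d (x1, y1) (x2, y2) \<le> d (x1, y1) (x2, y1) + d (x2, y1) (x2, y2)"
    using D.triangle assms(3-6) by auto
  also have "\<dots> = dX x1 x2 + dY y1 y2"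
    using pres assms(3-6) unfolding partial_distance_preserving_def by auto
  finally show ?thesis .
qed

theorem corollary3p5:
  fixes X :: "'a set" and dX :: "'a \<Rightarrow> 'a \<Rightarrow> real"
    and Y :: "'b set" and dY :: "'b \<Rightarrow> 'b \<Rightarrow> real"
    and d :: "'a \<times> 'b \<Rightarrow> 'a \<times> 'b \<Rightarrow> real"
  assumes "Metric_space X dX" and "Metric_space Y dY"
    and "Metric_space (X \<times> Y) d"
    and "distance_increasing X dX Y dY d"
    and "partial_distance_preserving X dX Y dY d"
  shows "Metric_space.mtopology (X \<times> Y) d =
         prod_topology (Metric_space.mtopology X dX) (Metric_space.mtopology Y dY)"
proof -
  interpret XY: Metric_space12 X dX Y dY
    using assms(1,2) by (simp add: Metric_space12_def)
  have "Metric_space.mtopology (X \<times> Y) d = XY.Prod_metric.mtopology"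
  proof (rule mtopology_eq_if_Lipschitz_equivalent[OF assms(3) XY.prod_metric])
    fix p q assume "p \<in> X \<times> Y" "q \<in> X \<times> Y"
    then obtain x1 y1 x2 y2 where pq: "p = (x1, y1)" "q = (x2, y2)"
      and mem: "x1 \<in> X" "x2 \<in> X" "y1 \<in> Y" "y2 \<in> Y" by auto
    note lower = distance_increasing_component_le[OF assms(1,2,4,5) mem]
    note upper = partial_distance_preserving_le_sum[OF assms(3,5) mem]
    have prod_lower: "dX x1 x2 \<le> prod_dist dX dY (x1, y1) (x2, y2)"
      "dY y1 y2 \<le> prod_dist dX dY (x1, y1) (x2, y2)"
      by (rule XY.component_le_prod_metric)+
    have prod_upper: "prod_dist dX dY (x1, y1) (x2, y2) \<le> dX x1 x2 + dY y1 y2"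
      using XY.prod_metric_le_components mem by blast
    show "prod_dist dX dY p q \<le> 2 * d p q" "d p q \<le> 2 * prod_dist dX dY p q"
      using lower upper prod_lower prod_upper pq by auto
  qed auto
  then show ?thesis
    using XY.mtopology_prod_metric by simp
qed

end
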